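(* Let $F$ be a field containing $\mathcal K$ and let $w_1,\dots,w_N:\mathbb C\to F$ satisfy $L_j(u)w_m(u)=0$ for all $1\le m\le j\le N$ and all $u$, and assume the Casorati determinants $[0,1,\dots,j-1]$ are nonzero for all $1\le j\le N$ and all $u$. Define, for $1\le m\le N$, \[ \tilde x_m(u)=\frac{[0,\dots,m-1]\,[2,\dots,m]}{[1,\dots,m]\,[1,\dots,m-1]} \] (where $[2,\dots,m]$ and $[1,\dots,m-1]$ are $(m-1)\times(m-1)$ determinants, equal to $1$ when $m=1$). Then $\tilde x_m(u)=x_m(u)$ for all $1\le m\le N$ and all $u$.
   Context: Fix an integer $n\ge 2$ and put $N=2n+2$. Let $Q_a(u)$ ($1\le a\le n$, $u\in\mathbb C$) be algebraically independent commuting indeterminates, $\mathcal K$ the field of fractions of $\mathbb Z[Q_a(u)^{\pm1}]$. Put $d_a=1+\delta_{an}$, $Y_a(u)=Q_a(u-\frac{d_a}{2})/Q_a(u+\frac{d_a}{2})$ for $1\le a\le n$, $Y_0(u)=1$. For $1\le a\le n$ set $z_a(u)=\frac{Y_a(u+\frac a2)}{Y_{a-1}(u+\frac{a+1}2)}$, $z_{\bar a}(u)=\frac{Y_{a-1}(u+\frac{2n-a+3}2)}{Y_a(u+\frac{2n-a+4}2)}$; set $x_a(u)=z_a(u)$, $x_{2n+3-a}(u)=z_{\bar a}(u)$ for $1\le a\le n$, and $x_{n+1}(u)=-x_{n+2}(u)=\frac{Q_n(u+\frac n2)Q_n(u+\frac{n+4}2)}{Q_n(u+\frac{n+2}2)^2}$.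 $D$ is the shift operator ($D\,c(u)=c(u+1)D$), acting on $w:\mathbb C\to F$ by $(\sum_jc_jD^j)w(u)=\sum_jc_j(u)w(u+j)$. Let $\epsilon_i=1$ for $i\notin\{n+1,n+2\}$ and $\epsilon_{n+1}=\epsilon_{n+2}=-1$, and for $1\le j\le N$ define $L_j(u)=\prod_{i=N+1-j}^{N}\bigl(D-\epsilon_ix_i(u+n+1-i)\bigr)$, factors ordered by increasing $i$ from left to right. (Then $L_N(u)$ equals $L(u)=\prod_{i=1}^N(x_i(u+n+1-i)-D)$.) Casorati determinants: for integers $i_1,\dots,i_m$, $[i_1,\dots,i_m]$ is the function $u\mapsto\det(w_r(u+i_s))_{1\le r,s\le m}$, using $w_1,\dots,w_m$. *)

theory Defs
  imports Complex_Main "HOL-Library.Poly_Mapping" "Jordan_Normal_Form.Determinant"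
begin

(* Polynomials are finitely supported maps from monomials
   (finitely supported exponent maps) to integer coefficients. *)
definition int_poly_eval :: "('v \<Rightarrow> 'F::field) \<Rightarrow> (('v \<Rightarrow>\<^sub>0 nat) \<Rightarrow>\<^sub>0 int) \<Rightarrow> 'F" where
  "int_poly_eval X p =
     (\<Sum>mo\<in>Poly_Mapping.keys p. of_int (Poly_Mapping.lookup p mo) * (\<Prod>v\<in>Poly_Mapping.keys mo. X v ^ Poly_Mapping.lookup mo v))"

definition int_poly_vars :: "(('v \<Rightarrow>\<^sub>0 nat) \<Rightarrow>\<^sub>0 int) \<Rightarrow> 'v set" where
  "int_poly_vars p = (\<Union>mo\<in>Poly_Mapping.keys p. Poly_Mapping.keys mo)"

definition alg_indep_int :: "'v set \<Rightarrow> ('v \<Rightarrow> 'F::field) \<Rightarrow> bool" where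
  "alg_indep_int V X \<longleftrightarrow>
     (\<forall>p. p \<noteq> 0 \<longrightarrow> int_poly_vars p \<subseteq> V \<longrightarrow> int_poly_eval X p \<noteq> 0)"

definition dd :: "nat \<Rightarrow> nat \<Rightarrow> complex" where
  "dd n a = (if a = n then 2 else 1)"

definition YY :: "nat \<Rightarrow> (nat \<Rightarrow> complex \<Rightarrow> 'F::field) \<Rightarrow> nat \<Rightarrow> complex \<Rightarrow> 'F" where
  "YY n Q a u = (if a = 0 then 1 else Q a (u - dd n a / 2) / Q a (u + dd n a / 2))"

definition zz :: "nat \<Rightarrow> (nat \<Rightarrow> complex \<Rightarrow> 'F::field) \<Rightarrow> nat \<Rightarrow> complex \<Rightarrow> 'F" where
  "zz n Q a u = YY n Q a (u + of_nat a / 2) / YY n Q (a - 1) (u + (of_nat a + 1) / 2)"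

definition zbar :: "nat \<Rightarrow> (nat \<Rightarrow> complex \<Rightarrow> 'F::field) \<Rightarrow> nat \<Rightarrow> complex \<Rightarrow> 'F" where
  "zbar n Q a u = YY n Q (a - 1) (u + (2 * of_nat n - of_nat a + 3) / 2)
                  / YY n Q a (u + (2 * of_nat n - of_nat a + 4) / 2)"

definition xx :: "nat \<Rightarrow> (nat \<Rightarrow> complex \<Rightarrow> 'F::field) \<Rightarrow> nat \<Rightarrow> complex \<Rightarrow> 'F" where
  "xx n Q i u =
    (if 1 \<le> i \<and> i \<le> n then zz n Q i u
     else if i = n + 1 then
       Q n (u + of_nat n / 2) * Q n (u + (of_nat n + 4) / 2) / Q n (u + (of_nat n + 2) / 2) ^ 2
     else if i = n + 2 then
       - (Q n (u + of_nat n / 2) * Q n (u + (of_nat n + 4) / 2) / Q n (u + (of_nat n + 2) / 2) ^ 2)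
     else if n + 3 \<le> i \<and> i \<le> 2 * n + 2 then zbar n Q (2 * n + 3 - i) u
     else 0)"

definition eps :: "nat \<Rightarrow> nat \<Rightarrow> 'F::field" where
  "eps n i = (if i = n + 1 \<or> i = n + 2 then -1 else 1)"

definition Lfactor :: "nat \<Rightarrow> (nat \<Rightarrow> complex \<Rightarrow> 'F::field) \<Rightarrow> nat \<Rightarrow> (complex \<Rightarrow> 'F) \<Rightarrow> complex \<Rightarrow> 'F" where
  "Lfactor n Q i g u = g (u + 1) - eps n i * xx n Q i (u + of_nat (n + 1) - of_nat i) * g u"

(* action of L_j(u) = prod_{i=N+1-j}^{N} (D - eps_i x_i(u+n+1-i)) (increasing i left to right),
   N = 2n+2: the rightmost factor acts first *)
definition Lop :: "nat \<Rightarrow> (nat \<Rightarrow> complex \<Rightarrow> 'F::field) \<Rightarrow> nat \<Rightarrow> (complex \<Rightarrow> 'F) \<Rightarrow> complex \<Rightarrow> 'F" where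
  "Lop n Q j w = foldr (Lfactor n Q) [2 * n + 3 - j ..< 2 * n + 3] w"

(* Casorati determinant [i_1,...,i_m](u) = det (w_r(u+i_s))_{1\<le>r,s\<le>m} using w_1..w_m *)
definition casorati :: "(nat \<Rightarrow> complex \<Rightarrow> 'F::field) \<Rightarrow> int list \<Rightarrow> complex \<Rightarrow> 'F" where
  "casorati w idx u = det (mat (length idx) (length idx)
       (\<lambda>(r, s). w (Suc r) (u + of_int (idx ! s))))"

definition xtilde :: "(nat \<Rightarrow> complex \<Rightarrow> 'F::field) \<Rightarrow> nat \<Rightarrow> complex \<Rightarrow> 'F" where
  "xtilde w m u =
     casorati w (map int [0..<m]) u * casorati w (map int [2..<m+1]) u
     / (casorati w (map int [1..<m+1]) u * casorati w (map int [1..<m]) u)"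

end

theory Submission
  imports Defs
begin

(* Write C_j(u) = [0,...,j-1](u). The functions w_1,...,w_j are annihilated by L_j, a monic
   difference operator of order j with constant coefficient (-1)^j P_j(u), where
   P_j(u) = prod_{i=N+1-j}^{N} eps_i x_i(u+n+1-i). So the Casorati matrix at u+1 is the one at u
   times a companion matrix, and C_j(u+1) = P_j(u) C_j(u). The product P_j telescopes:
   P_j(u) = 1/Y_j(u+j/2) for j <= n, P_j(u) = -1/Y_{N-j}(u+j/2) for j >= n+2, and
   P_{n+1}(u) = (Q_n(u+(n+2)/2)/Q_n(u+n/2))^2. As xtilde_m(u) = P_{m-1}(u+1)/P_m(u), the theorem
   reduces to P_{m-1}(u+1) = x_m(u) P_m(u), a direct computation from the definitions.
   Algebraic independence is only needed to know that the Q_a(v) do not vanish. *)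

lemma alg_indep_int_nonzero:
  assumes "alg_indep_int V X" "x \<in> V"
  shows "X x \<noteq> 0"
proof -
  let ?p = "Poly_Mapping.single (Poly_Mapping.single x (1::nat)) (1::int)"
  have "?p \<noteq> 0" "int_poly_vars ?p \<subseteq> V"
    using assms(2) by (simp_all add: int_poly_vars_def)
  then have "int_poly_eval X ?p \<noteq> 0"
    using assms(1) by (simp add: alg_indep_int_def)
  then show ?thesis
    by (simp add: int_poly_eval_def)
qed

lemma foldr_difference_operator_expansion:
  fixes a :: "'i \<Rightarrow> 'a::semiring_1 \<Rightarrow> 'F::field"
    and F :: "'i \<Rightarrow> ('a \<Rightarrow> 'F) \<Rightarrow> 'a \<Rightarrow> 'F"
  assumes F: "\<And>i g v. F i g v = g (v + 1) - a i v * g v"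
  shows "\<exists>c. (\<forall>f v. foldr F xs f v = (\<Sum>k\<le>length xs. c k v * f (v + of_nat k)))
           \<and> (\<forall>v. c (length xs) v = 1)
           \<and> (\<forall>v. c 0 v = (-1) ^ length xs * prod_list (map (\<lambda>i. a i v) xs))"
proof (induction xs)
  case Nil
  show ?case by (rule exI[of _ "\<lambda>k v. 1"]) simp
next
  case (Cons i xs)
  then obtain c where c: "\<And>f v. foldr F xs f v = (\<Sum>k\<le>length xs. c k v * f (v + of_nat k))"
    and c_top: "\<And>v. c (length xs) v = 1"
    and c_0: "\<And>v. c 0 v = (-1) ^ length xs * prod_list (map (\<lambda>i. a i v) xs)"
    by blast
  let ?l = "length xs"
  define d where
    "d k v = (if k = 0 then 0 else c (k - 1) (v + 1)) - a i v * (if k \<le> ?l then c k v else 0)" for k v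
  have "foldr F (i # xs) f v = (\<Sum>k\<le>Suc ?l. d k v * f (v + of_nat k))" for f v
  proof -
    have "foldr F (i # xs) f v
        = (\<Sum>k\<le>?l. c k (v + 1) * f (v + 1 + of_nat k)) - a i v * (\<Sum>k\<le>?l. c k v * f (v + of_nat k))"
      by (simp add: F c)
    also have "(\<Sum>k\<le>?l. c k (v + 1) * f (v + 1 + of_nat k))
        = (\<Sum>k\<le>Suc ?l. (if k = 0 then 0 else c (k - 1) (v + 1)) * f (v + of_nat k))"
      by (subst sum.atMost_Suc_shift) (simp add: add.assoc)
    also have "a i v * (\<Sum>k\<le>?l. c k v * f (v + of_nat k))
        = (\<Sum>k\<le>Suc ?l. a i v * (if k \<le> ?l then c k v else 0) * f (v + of_nat k))"
      by (simp add: sum_distrib_left algebra_simps)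
    finally show ?thesis by (simp add: d_def sum_subtractf algebra_simps)
  qed
  moreover have "d (Suc ?l) v = 1" for v by (simp add: d_def c_top)
  moreover have "d 0 v = (-1) ^ length (i # xs) * prod_list (map (\<lambda>i. a i v) (i # xs))" for v
    by (simp add: d_def c_0)
  ultimately show ?case by (intro exI[of _ d]) simp
qed

lemma det_companion_mat:
  fixes c :: "nat \<Rightarrow> 'F::field"
  assumes "1 \<le> m"
  shows "det (mat m m (\<lambda>(i, j). if j = m - 1 then - c i else if i = j + 1 then 1 else 0))
    = (-1) ^ m * c 0"
proof -
  let ?C = "mat m m (\<lambda>(i, j). if j = m - 1 then - c i else if i = j + 1 then 1 else (0::'F))"
  have "det ?C = (\<Sum>j<m. ?C $$ (0, j) * cofactor ?C 0 j)"
    by (rule laplace_expansion_row) (use assms in auto)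
  also have "\<dots> = (\<Sum>j<m. if j = m - 1 then - c 0 * cofactor ?C 0 (m - 1) else 0)"
    by (rule sum.cong) (use assms in auto)
  also have "\<dots> = - c 0 * cofactor ?C 0 (m - 1)"
    using assms by simp
  also have "mat_delete ?C 0 (m - 1) = 1\<^sub>m (m - 1)"
    by (rule eq_matI) (auto simp: mat_delete_def)
  then have "cofactor ?C 0 (m - 1) = (-1) ^ (m - 1)"
    by (simp add: cofactor_def)
  finally show ?thesis
    using assms by (cases m) auto
qed

lemma det_shift_by_recurrence:
  fixes W :: "nat \<Rightarrow> 'a::semiring_1 \<Rightarrow> 'F::field" and c :: "nat \<Rightarrow> 'F"
  assumes "1 \<le> m"
    and rec: "\<And>r. r < m \<Longrightarrow> W r (u + of_nat m) = - (\<Sum>k<m. c k * W r (u + of_nat k))"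
  shows "det (mat m m (\<lambda>(r, s). W r (u + 1 + of_nat s)))
    = (-1) ^ m * c 0 * det (mat m m (\<lambda>(r, s). W r (u + of_nat s)))"
proof -
  let ?C = "mat m m (\<lambda>(i, j). if j = m - 1 then - c i else if i = j + 1 then 1 else (0::'F))"
  let ?M = "mat m m (\<lambda>(r, s). W r (u + of_nat s))"
  have "mat m m (\<lambda>(r, s). W r (u + 1 + of_nat s)) = ?M * ?C"
  proof (rule eq_matI)
    fix r s
    assume "r < dim_row (?M * ?C)" and "s < dim_col (?M * ?C)"
    then have r: "r < m" and s: "s < m" by auto
    have "(?M * ?C) $$ (r, s)
        = (\<Sum>k<m. W r (u + of_nat k) * (if s = m - 1 then - c k else if k = s + 1 then 1 else 0))"
      using r s by (simp add: scalar_prod_def lessThan_atLeast0)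
    also have "\<dots> = W r (u + 1 + of_nat s)"
    proof (cases "s = m - 1")
      case True
      then have "m = Suc s"
        using assms(1) by simp
      then have "u + 1 + of_nat s = u + of_nat m"
        by (simp add: add.assoc)
      with True show ?thesis
        by (simp add: rec[OF r] sum_negf[symmetric] algebra_simps)
    next
      case False
      then show ?thesis
        using s by (simp add: if_distrib add.assoc cong: if_cong)
    qed
    finally show "mat m m (\<lambda>(r, s). W r (u + 1 + of_nat s)) $$ (r, s) = (?M * ?C) $$ (r, s)"
      using r s by simp
  qed auto
  then have "det (mat m m (\<lambda>(r, s). W r (u + 1 + of_nat s))) = det ?M * det ?C"
    by (simp add: det_mult[of _ m])
  also have "det ?C = (-1) ^ m * c 0"
    by (rule det_companion_mat[OF assms(1)])
  finally show ?thesis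
    by (simp only: mult.commute)
qed

lemma det_shift_by_annihilator:
  fixes W :: "nat \<Rightarrow> 'a::semiring_1 \<Rightarrow> 'F::field"
  assumes F: "\<And>i g v. F i g v = g (v + 1) - a i v * g v"
    and annihilated: "\<And>r. r < length xs \<Longrightarrow> foldr F xs (W r) u = 0"
  shows "det (mat (length xs) (length xs) (\<lambda>(r, s). W r (u + 1 + of_nat s)))
    = prod_list (map (\<lambda>i. a i u) xs)
      * det (mat (length xs) (length xs) (\<lambda>(r, s). W r (u + of_nat s)))"
proof (cases "xs = []")
  case True
  then show ?thesis by (simp add: det_def)
next
  case False
  let ?m = "length xs"
  obtain c where c: "\<And>f v. foldr F xs f v = (\<Sum>k\<le>?m. c k v * f (v + of_nat k))"
    and c_top: "\<And>v. c ?m v = 1"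
    and c_0: "\<And>v. c 0 v = (-1) ^ ?m * prod_list (map (\<lambda>i. a i v) xs)"
    using foldr_difference_operator_expansion[of F a xs, OF F] by blast
  have "W r (u + of_nat ?m) = - (\<Sum>k<?m. c k u * W r (u + of_nat k))" if "r < ?m" for r
  proof -
    have "(\<Sum>k\<le>?m. c k u * W r (u + of_nat k)) = 0"
      using annihilated[OF that] by (simp only: c)
    then show ?thesis
      by (simp add: lessThan_Suc_atMost[symmetric] c_top eq_neg_iff_add_eq_0 add.commute)
  qed
  then have "det (mat ?m ?m (\<lambda>(r, s). W r (u + 1 + of_nat s)))
      = (-1) ^ ?m * c 0 u * det (mat ?m ?m (\<lambda>(r, s). W r (u + of_nat s)))"
    using False by (intro det_shift_by_recurrence) (simp_all add: Suc_le_eq)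
  then show ?thesis
    by (simp add: c_0 mult.assoc[symmetric] power_add[symmetric])
qed

lemma xx_low:
  "1 \<le> i \<Longrightarrow> i \<le> n \<Longrightarrow>
    xx n Q i u = YY n Q i (u + of_nat i / 2) / YY n Q (i - 1) (u + (of_nat i + 1) / 2)"
  by (simp add: xx_def zz_def)

lemma xx_high:
  assumes "n + 3 \<le> i" "i \<le> 2 * n + 2"
  shows "xx n Q i u =
    YY n Q (2 * n + 2 - i) (u + of_nat i / 2) / YY n Q (2 * n + 3 - i) (u + (of_nat i + 1) / 2)"
proof -
  have "2 * of_nat n - of_nat (2 * n + 3 - i) + (3::complex) = of_nat i"
       "2 * of_nat n - of_nat (2 * n + 3 - i) + (4::complex) = of_nat i + 1"
    using assms by (simp_all add: of_nat_diff)
  with assms show ?thesis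
    by (simp add: xx_def zbar_def add_ac)
qed

lemma casorati_upt0:
  "casorati w (map int [0..<j]) v = det (mat j j (\<lambda>(r, s). w (Suc r) (v + of_nat s)))"
  unfolding casorati_def by (intro arg_cong[where f = det] eq_matI) auto

lemma casorati_upt:
  "casorati w (map int [k..<l]) v = casorati w (map int [0..<l - k]) (v + of_nat k)"
  unfolding casorati_def by (intro arg_cong[where f = det] eq_matI) (auto simp: algebra_simps)

definition Lcoeff :: "nat \<Rightarrow> (nat \<Rightarrow> complex \<Rightarrow> 'F::field) \<Rightarrow> nat \<Rightarrow> complex \<Rightarrow> 'F" where
  "Lcoeff n Q i u = eps n i * xx n Q i (u + of_nat (n + 1) - of_nat i)"

definition det_shift_factor :: "nat \<Rightarrow> (nat \<Rightarrow> complex \<Rightarrow> 'F::field) \<Rightarrow> nat \<Rightarrow> complex \<Rightarrow> 'F" where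
  "det_shift_factor n Q m u =
    (if m \<le> n then 1 / YY n Q m (u + of_nat m / 2)
     else if m = n + 1 then (Q n (u + (of_nat n + 2) / 2) / Q n (u + of_nat n / 2)) ^ 2
     else - 1 / YY n Q (2 * n + 2 - m) (u + of_nat m / 2))"

lemma det_shift_factor_low: "m \<le> n \<Longrightarrow> det_shift_factor n Q m u = 1 / YY n Q m (u + of_nat m / 2)"
  by (simp add: det_shift_factor_def)

lemma det_shift_factor_high:
  "n + 2 \<le> m \<Longrightarrow> det_shift_factor n Q m u = - 1 / YY n Q (2 * n + 2 - m) (u + of_nat m / 2)"
  by (simp add: det_shift_factor_def)

context
  fixes n :: nat and Q :: "nat \<Rightarrow> complex \<Rightarrow> 'F::field"
  assumes Q_nonzero: "\<And>a v. 1 \<le> a \<Longrightarrow> a \<le> n \<Longrightarrow> Q a v \<noteq> 0"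
    and n_pos: "1 \<le> n"
begin

lemma YY_nonzero: "a \<le> n \<Longrightarrow> YY n Q a v \<noteq> 0"
  by (simp add: YY_def Q_nonzero)

lemma values_at_middle_indices:
  assumes "u + of_nat n / 2 = v"
  shows det_shift_factor_n: "det_shift_factor n Q n u = Q n (v + 1) / Q n (v - 1)"
    and det_shift_factor_n1: "det_shift_factor n Q (n + 1) u = (Q n (v + 1) / Q n v) ^ 2"
    and det_shift_factor_n2: "det_shift_factor n Q (n + 2) u = - (Q n (v + 2) / Q n v)"
    and xx_n1: "xx n Q (n + 1) u = Q n v * Q n (v + 2) / Q n (v + 1) ^ 2"
    and xx_n2: "xx n Q (n + 2) u = - (Q n v * Q n (v + 2) / Q n (v + 1) ^ 2)"
proof -
  have args: "u + (of_nat n + 2) / 2 = v + 1" "u + (of_nat n + 4) / 2 = v + 2"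
    "u + of_nat (n + 2) / 2 = v + 1"
    using assms by (simp_all add: field_simps)
  show "det_shift_factor n Q n u = Q n (v + 1) / Q n (v - 1)"
    using assms Q_nonzero n_pos by (simp add: det_shift_factor_def YY_def dd_def)
  show "det_shift_factor n Q (n + 1) u = (Q n (v + 1) / Q n v) ^ 2"
    using assms args by (simp add: det_shift_factor_def)
  show "det_shift_factor n Q (n + 2) u = - (Q n (v + 2) / Q n v)"
    using assms args Q_nonzero n_pos by (simp add: det_shift_factor_def YY_def dd_def add.commute)
  show "xx n Q (n + 1) u = Q n v * Q n (v + 2) / Q n (v + 1) ^ 2"
    using assms args by (simp add: xx_def)
  show "xx n Q (n + 2) u = - (Q n v * Q n (v + 2) / Q n (v + 1) ^ 2)"
    using assms args by (simp add: xx_def)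
qed

lemma Lcoeff_eq_xx:
  "i \<noteq> n + 1 \<Longrightarrow> i \<noteq> n + 2 \<Longrightarrow> Lcoeff n Q i u = xx n Q i (u + of_nat (n + 1) - of_nat i)"
  by (simp add: Lcoeff_def eps_def)

lemma det_shift_factor_Suc_low:
  assumes "m < n"
  shows "det_shift_factor n Q (Suc m) u = Lcoeff n Q (2 * n + 2 - m) u * det_shift_factor n Q m u"
proof -
  let ?i = "2 * n + 2 - m" and ?v = "u + of_nat (n + 1) - of_nat (2 * n + 2 - m)"
  have args: "?v + of_nat ?i / 2 = u + of_nat m / 2" "?v + (of_nat ?i + 1) / 2 = u + (of_nat m + 1) / 2"
    using assms by (simp_all add: of_nat_diff field_simps)
  have idx: "2 * n + 2 - ?i = m" "2 * n + 3 - ?i = Suc m"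
    using assms by simp_all
  have "Lcoeff n Q ?i u = xx n Q ?i ?v"
    using assms by (intro Lcoeff_eq_xx) auto
  also have "\<dots> = YY n Q (2 * n + 2 - ?i) (?v + of_nat ?i / 2)
      / YY n Q (2 * n + 3 - ?i) (?v + (of_nat ?i + 1) / 2)"
    using assms by (intro xx_high) auto
  also have "\<dots> = YY n Q m (u + of_nat m / 2) / YY n Q (Suc m) (u + (of_nat m + 1) / 2)"
    by (simp only: args idx)
  finally show ?thesis
    using assms YY_nonzero by (simp add: det_shift_factor_def add.commute)
qed

lemma det_shift_factor_Suc_high:
  assumes "n + 2 \<le> m" "m < 2 * n + 2"
  shows "det_shift_factor n Q (Suc m) u = Lcoeff n Q (2 * n + 2 - m) u * det_shift_factor n Q m u"
proof -
  let ?i = "2 * n + 2 - m" and ?v = "u + of_nat (n + 1) - of_nat (2 * n + 2 - m)"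
  have args: "?v + of_nat ?i / 2 = u + of_nat m / 2" "?v + (of_nat ?i + 1) / 2 = u + (of_nat m + 1) / 2"
    using assms by (simp_all add: of_nat_diff field_simps)
  have "Lcoeff n Q ?i u = xx n Q ?i ?v"
    using assms by (intro Lcoeff_eq_xx) auto
  also have "\<dots> = YY n Q ?i (?v + of_nat ?i / 2) / YY n Q (?i - 1) (?v + (of_nat ?i + 1) / 2)"
    using assms by (intro xx_low) auto
  also have "\<dots> = YY n Q ?i (u + of_nat m / 2) / YY n Q (?i - 1) (u + (of_nat m + 1) / 2)"
    by (simp only: args)
  finally show ?thesis
    using assms YY_nonzero by (simp add: det_shift_factor_def add.commute)
qed

lemma det_shift_factor_Suc_middle:
  shows "det_shift_factor n Q (n + 1) u = Lcoeff n Q (n + 2) u * det_shift_factor n Q n u"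
    and "det_shift_factor n Q (n + 2) u = Lcoeff n Q (n + 1) u * det_shift_factor n Q (n + 1) u"
proof -
  define v where "v = u + of_nat n / 2"
  have v: "u + of_nat n / 2 = v" "u - 1 + of_nat n / 2 = v - 1"
    by (simp_all add: v_def)
  have "Lcoeff n Q (n + 2) u = - xx n Q (n + 2) (u - 1)"
    by (simp add: Lcoeff_def eps_def)
  also have "\<dots> = Q n (v - 1) * Q n (v + 1) / Q n v ^ 2"
    using xx_n2[OF v(2)] by (simp add: add.commute)
  finally have "Lcoeff n Q (n + 2) u = Q n (v - 1) * Q n (v + 1) / Q n v ^ 2" .
  moreover have "Lcoeff n Q (n + 1) u = - (Q n v * Q n (v + 2) / Q n (v + 1) ^ 2)"
    using xx_n1[OF v(1)] by (simp add: Lcoeff_def eps_def)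
  ultimately show "det_shift_factor n Q (n + 1) u = Lcoeff n Q (n + 2) u * det_shift_factor n Q n u"
    and "det_shift_factor n Q (n + 2) u = Lcoeff n Q (n + 1) u * det_shift_factor n Q (n + 1) u"
    unfolding det_shift_factor_n[OF v(1)] det_shift_factor_n1[OF v(1)] det_shift_factor_n2[OF v(1)]
    using Q_nonzero[OF n_pos order_refl] by (simp_all add: field_simps power2_eq_square)
qed

lemma det_shift_factor_Suc:
  assumes "m < 2 * n + 2"
  shows "det_shift_factor n Q (Suc m) u = Lcoeff n Q (2 * n + 2 - m) u * det_shift_factor n Q m u"
proof -
  consider "m < n" | "m = n" | "m = n + 1" | "n + 2 \<le> m"
    by linarith
  then show ?thesis
  proof cases
    case 1
    then show ?thesis by (rule det_shift_factor_Suc_low)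
  next
    case 2
    then show ?thesis using det_shift_factor_Suc_middle(1) by simp
  next
    case 3
    then show ?thesis using det_shift_factor_Suc_middle(2) by simp
  next
    case 4
    then show ?thesis using assms by (rule det_shift_factor_Suc_high)
  qed
qed

lemma prod_Lcoeff_eq_det_shift_factor:
  "m \<le> 2 * n + 2 \<Longrightarrow>
    prod_list (map (\<lambda>i. Lcoeff n Q i u) [2 * n + 3 - m..<2 * n + 3]) = det_shift_factor n Q m u"
proof (induction m)
  case 0
  then show ?case by (simp add: det_shift_factor_def YY_def)
next
  case (Suc m)
  have "2 * n + 3 - Suc m = 2 * n + 2 - m" "Suc (2 * n + 2 - m) = 2 * n + 3 - m"
    using Suc.prems by simp_all
  then have "[2 * n + 3 - Suc m..<2 * n + 3] = (2 * n + 2 - m) # [2 * n + 3 - m..<2 * n + 3]"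
    using upt_conv_Cons[of "2 * n + 2 - m" "2 * n + 3"] by simp
  with Suc show ?case
    by (simp add: det_shift_factor_Suc)
qed

lemma xx_mul_det_shift_factor_low:
  assumes "1 \<le> m" "m \<le> n"
  shows "det_shift_factor n Q (m - 1) (u + 1) = xx n Q m u * det_shift_factor n Q m u"
proof -
  have arg: "u + 1 + of_nat (m - 1) / 2 = u + (of_nat m + 1) / 2"
    using assms by (simp add: of_nat_diff field_simps)
  have "det_shift_factor n Q (m - 1) (u + 1) = 1 / YY n Q (m - 1) (u + 1 + of_nat (m - 1) / 2)"
    using assms by (intro det_shift_factor_low) simp
  also have "\<dots> = 1 / YY n Q (m - 1) (u + (of_nat m + 1) / 2)"
    by (simp only: arg)
  finally show ?thesis
    using assms YY_nonzero by (simp add: xx_low det_shift_factor_low)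
qed

lemma xx_mul_det_shift_factor_high:
  assumes "n + 3 \<le> m" "m \<le> 2 * n + 2"
  shows "det_shift_factor n Q (m - 1) (u + 1) = xx n Q m u * det_shift_factor n Q m u"
proof -
  have arg: "u + 1 + of_nat (m - 1) / 2 = u + (of_nat m + 1) / 2"
    using assms by (simp add: of_nat_diff field_simps)
  have idx: "2 * n + 2 - (m - 1) = 2 * n + 3 - m"
    using assms by simp
  have "det_shift_factor n Q (m - 1) (u + 1)
      = - 1 / YY n Q (2 * n + 2 - (m - 1)) (u + 1 + of_nat (m - 1) / 2)"
    using assms by (intro det_shift_factor_high) simp
  also have "\<dots> = - 1 / YY n Q (2 * n + 3 - m) (u + (of_nat m + 1) / 2)"
    by (simp only: arg idx)
  finally show ?thesis
    using assms YY_nonzero by (simp add: xx_high det_shift_factor_high)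
qed

lemma xx_mul_det_shift_factor_middle:
  shows "det_shift_factor n Q n (u + 1) = xx n Q (n + 1) u * det_shift_factor n Q (n + 1) u"
    and "det_shift_factor n Q (n + 1) (u + 1) = xx n Q (n + 2) u * det_shift_factor n Q (n + 2) u"
proof -
  define v where "v = u + of_nat n / 2"
  have v: "u + of_nat n / 2 = v" "u + 1 + of_nat n / 2 = v + 1"
    by (simp_all add: v_def)
  show "det_shift_factor n Q n (u + 1) = xx n Q (n + 1) u * det_shift_factor n Q (n + 1) u"
    and "det_shift_factor n Q (n + 1) (u + 1) = xx n Q (n + 2) u * det_shift_factor n Q (n + 2) u"
    unfolding det_shift_factor_n[OF v(2)] det_shift_factor_n1[OF v(1)] det_shift_factor_n1[OF v(2)]
      det_shift_factor_n2[OF v(1)] xx_n1[OF v(1)] xx_n2[OF v(1)]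
    using Q_nonzero[OF n_pos order_refl] by (simp_all add: field_simps power2_eq_square)
qed

lemma xx_mul_det_shift_factor:
  assumes "1 \<le> m" "m \<le> 2 * n + 2"
  shows "det_shift_factor n Q (m - 1) (u + 1) = xx n Q m u * det_shift_factor n Q m u"
proof -
  consider "m \<le> n" | "m = n + 1" | "m = n + 2" | "n + 3 \<le> m"
    by linarith
  then show ?thesis
  proof cases
    case 1
    with assms show ?thesis by (intro xx_mul_det_shift_factor_low)
  next
    case 2
    then show ?thesis using xx_mul_det_shift_factor_middle(1) by simp
  next
    case 3
    then show ?thesis using xx_mul_det_shift_factor_middle(2) by simp
  next
    case 4
    with assms show ?thesis by (intro xx_mul_det_shift_factor_high)
  qed
qed

lemma casorati_shift:
  fixes w :: "nat \<Rightarrow> complex \<Rightarrow> 'F"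
  assumes "j \<le> 2 * n + 2"
    and annihilated: "\<And>r. r < j \<Longrightarrow> Lop n Q j (w (Suc r)) u = 0"
  shows "casorati w (map int [0..<j]) (u + 1) = det_shift_factor n Q j u * casorati w (map int [0..<j]) u"
proof -
  let ?xs = "[2 * n + 3 - j..<2 * n + 3]"
  have "length ?xs = j"
    using assms(1) by simp
  moreover have "Lfactor n Q i g v = g (v + 1) - Lcoeff n Q i v * g v" for i g v
    by (simp add: Lfactor_def Lcoeff_def)
  ultimately have "det (mat j j (\<lambda>(r, s). w (Suc r) (u + 1 + of_nat s)))
      = prod_list (map (\<lambda>i. Lcoeff n Q i u) ?xs) * det (mat j j (\<lambda>(r, s). w (Suc r) (u + of_nat s)))"
    using det_shift_by_annihilator[of "Lfactor n Q" "Lcoeff n Q" ?xs "\<lambda>r. w (Suc r)" u] annihilated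
    by (simp add: Lop_def)
  then show ?thesis
    using assms(1) by (simp add: casorati_upt0 prod_Lcoeff_eq_det_shift_factor)
qed

lemma xtilde_eq_xx:
  fixes w :: "nat \<Rightarrow> complex \<Rightarrow> 'F"
  defines "C j v \<equiv> casorati w (map int [0..<j]) v"
  assumes shift: "\<And>j v. j \<le> 2 * n + 2 \<Longrightarrow> C j (v + 1) = det_shift_factor n Q j v * C j v"
    and nonzero: "\<And>j v. 1 \<le> j \<Longrightarrow> j \<le> 2 * n + 2 \<Longrightarrow> C j v \<noteq> 0"
    and m: "1 \<le> m" "m \<le> 2 * n + 2"
  shows "xtilde w m u = xx n Q m u"
proof -
  have shift_m1: "C (m - 1) (u + 1 + 1) = det_shift_factor n Q (m - 1) (u + 1) * C (m - 1) (u + 1)"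
    and shift_m: "C m (u + 1) = det_shift_factor n Q m u * C m u"
    using m by (intro shift; simp)+
  have "C (m - 1) (u + 1) \<noteq> 0"
    using nonzero[of "m - 1"] m by (cases "m = 1") (simp_all add: C_def casorati_def det_def)
  moreover have "C m u \<noteq> 0" "det_shift_factor n Q m u \<noteq> 0"
    using nonzero[of m] m shift_m by auto
  moreover have "xtilde w m u = C m u * C (m - 1) (u + 1 + 1) / (C m (u + 1) * C (m - 1) (u + 1))"
    unfolding xtilde_def casorati_upt[of w 1] casorati_upt[of w 2] C_def by (simp add: add.assoc)
  ultimately show ?thesis
    unfolding shift_m1 shift_m xx_mul_det_shift_factor[OF m] by simp
qed

end

theorem mainTheorem17:
  fixes n :: nat and Q :: "nat \<Rightarrow> complex \<Rightarrow> 'F::field"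
    and w :: "nat \<Rightarrow> complex \<Rightarrow> 'F"
  assumes "n \<ge> 2"
    and "alg_indep_int {(a, u). 1 \<le> a \<and> a \<le> n} (\<lambda>(a, u). Q a u)"
    and "\<forall>j\<in>{1..2*n+2}. \<forall>m\<in>{1..j}. \<forall>u. Lop n Q j (w m) u = 0"
    and "\<forall>j\<in>{1..2*n+2}. \<forall>u. casorati w (map int [0..<j]) u \<noteq> 0"
  shows "\<forall>m\<in>{1..2*n+2}. \<forall>u. xtilde w m u = xx n Q m u"
proof -
  have Q_nonzero: "Q a v \<noteq> 0" if "1 \<le> a" "a \<le> n" for a v
    using alg_indep_int_nonzero[OF assms(2), of "(a, v)"] that by simp
  have n_pos: "1 \<le> n"
    using assms(1) by simp
  have "casorati w (map int [0..<j]) (v + 1) = det_shift_factor n Q j v * casorati w (map int [0..<j]) v"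
    if "j \<le> 2 * n + 2" for j v
    using that assms(3) by (intro casorati_shift[OF Q_nonzero n_pos]) auto
  then show ?thesis
    using xtilde_eq_xx[OF Q_nonzero n_pos] assms(4) by auto
qed

end
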